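(* Let $\Sigma:\mathbb{R}\times\mathbb{R}_{>0}\times\mathcal{P}_{ac}^{+}(\mathbb{R})\to\mathbb{R}$ (drift) and $D:\mathbb{R}\times\mathbb{R}_{>0}\times\mathcal{P}_{ac}^{+}(\mathbb{R})\to\mathbb{R}_{>0}$ (diffusion) be given, where the third argument may be the whole current density (McKean–Vlasov type dependence). Let $\rho(x,t)>0$ be a sufficiently smooth solution of $$\partial_t\rho(x,t)=-\partial_x\big[\Sigma[x,t,\rho]\,\rho(x,t)\big]+\partial_x^2\big[D[x,t,\rho]\,\rho(x,t)\big],\qquad x\in\mathbb{R},\ t>0,$$ with initial condition $\rho(\cdot,0)=\rho_0\in\mathcal{P}_{ac}^{+}(\mathbb{R})$, such that for every $t$, $\rho(\cdot,t)\in\mathcal{P}_{ac}^{+}(\mathbb{R})$ (positive probability density with finite first moment), $\lim_{x\to\pm\infty}\rho(x,t)=0$, and such that the boundary terms at $-\infty$ vanish, i.e. $\Sigma\rho$, $\partial_x(D\rho)$, $D\rho$, $x\,\Sigma\rho$ and $x\,\partial_x(D\rho)$ all tend to $0$ as $x\to-\infty$. Define $F(x,t)=\int_{-\infty}^x\rho(y,t)\,dy$, $L(x,t)=\int_{-\infty}^x y\,\rho(y,t)\,dy$, let $G(\cdot,t):(0,1)\to\mathbb{R}$ be the inverse of $F(\cdot,t)$, and define the Lorenz curve $\mathcal{L}(f,t)=L(G(f,t),t)$ for $f\in[0,1]$. Then for $f\in(0,1)$ and $t>0$, $$\partial_t\mathcal{L}(f,t)=-\frac{\widetilde{D}[f,t,\mathcal{L}]}{\partial_f^2\mathcal{L}(f,t)}+\int_0^f\widetilde{\Sigma}[g,t,\mathcal{L}]\,dg,$$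 where $\widetilde{\Sigma}[f,t,\mathcal{L}]=\Sigma\big[\partial_f\mathcal{L}(f,t),\,t,\,(\partial_f^2\mathcal{L}(f,t))^{-1}\big]$ and $\widetilde{D}[f,t,\mathcal{L}]=D\big[\partial_f\mathcal{L}(f,t),\,t,\,(\partial_f^2\mathcal{L}(f,t))^{-1}\big]$; here the third argument denotes the density $\rho(\cdot,t)$ expressed through $\mathcal{L}$ via the identities $\partial_f\mathcal{L}(f,t)=G(f,t)$ and $\rho(G(f,t),t)=(\partial_f^2\mathcal{L}(f,t))^{-1}$ (so any integral functional $\int_{\mathbb{R}}Q(x)\rho(x,t)\,dx$ appearing in $\Sigma$ or $D$ becomes $\int_0^1 Q(\partial_g\mathcal{L}(g,t))\,dg$).
   Context: $\mathcal{P}_{ac}^{+}(\mathbb{R})$ denotes the space of Borel probability measures on $\mathbb{R}$ that are absolutely continuous with strictly positive density; such measures are identified with their densities. Since $\rho>0$, $F(\cdot,t)$ is strictly increasing from $0$ to $1$, so $G(\cdot,t)$ is well defined. *)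

theory Defs
  imports "HOL-Analysis.Analysis"
begin

definition dens :: "(real \<Rightarrow> real \<Rightarrow> real) \<Rightarrow> real \<Rightarrow> (real \<Rightarrow> real)" where
  "dens \<rho> t = (\<lambda>x. \<rho> x t)"

definition Pac_pos :: "(real \<Rightarrow> real) \<Rightarrow> bool" where
  "Pac_pos p \<longleftrightarrow> (\<forall>x. 0 < p x) \<and> p absolutely_integrable_on UNIV \<and> integral UNIV p = 1"

definition finite_first_moment :: "(real \<Rightarrow> real) \<Rightarrow> bool" where
  "finite_first_moment p \<longleftrightarrow> (\<lambda>x. x * p x) absolutely_integrable_on UNIV"

definition cdf :: "(real \<Rightarrow> real \<Rightarrow> real) \<Rightarrow> real \<Rightarrow> real \<Rightarrow> real" where
  "cdf \<rho> x t = integral {..x} (\<lambda>y. \<rho> y t)"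

definition pmom :: "(real \<Rightarrow> real \<Rightarrow> real) \<Rightarrow> real \<Rightarrow> real \<Rightarrow> real" where
  "pmom \<rho> x t = integral {..x} (\<lambda>y. y * \<rho> y t)"

definition quantile :: "(real \<Rightarrow> real \<Rightarrow> real) \<Rightarrow> real \<Rightarrow> real \<Rightarrow> real" where
  "quantile \<rho> f t = (THE x. cdf \<rho> x t = f)"

definition lorenz :: "(real \<Rightarrow> real \<Rightarrow> real) \<Rightarrow> real \<Rightarrow> real \<Rightarrow> real" where
  "lorenz \<rho> f t = pmom \<rho> (quantile \<rho> f t) t"

end

theory Submission
  imports Defs
begin

(* For fixed f, the tangent K(x,s) = L(x,s) + x (f - F(x,s)) to the convex Lorenz curve at its
   point (F(x,s), L(x,s)) lies below the curve at abscissa f and touches it at x = G(f,s); so the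
   Lorenz curve is the upper envelope of these tangents.  By the envelope principle its time
   derivative is the time derivative of K at the touching point, A(G(f,t)) with
   A(x) = d/dt L(x,t) - x d/dt F(x,t); this needs only continuity of G in t and an L^1 bound on
   the time difference quotients of (1 + |y|) rho.  Integrating the equation from -infinity
   gives d/dt F = d/dx (D rho) - Sigma rho, so A + D rho is the antiderivative of Sigma rho that
   vanishes at -infinity; the substitution x = G(g) turns it into the integral of Sigma(G(g))
   over [0, f], and d/df Lorenz = G, d^2/df^2 Lorenz = 1 / rho(G) give the stated form. *)

section \<open>Integrals over half-lines\<close>

lemma absolutely_integrable_on_atMost:
  fixes f :: "real \<Rightarrow> real"
  assumes "f absolutely_integrable_on UNIV"
  shows "f absolutely_integrable_on {..x}" and "f integrable_on {..x}" and "f integrable_on {a..b}"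
  using set_integrable_subset[of lebesgue UNIV f "{..x}"] set_integrable_subset[of lebesgue UNIV f "{a..b}"]
    assms by (auto intro: set_lebesgue_integral_eq_integral(1))

lemma integral_atMost_split:
  fixes f :: "real \<Rightarrow> real"
  assumes f: "f absolutely_integrable_on UNIV" and "a \<le> b"
  shows "integral {..b} f = integral {..a} f + integral {a..b} f"
proof -
  have "{..b} = {..a} \<union> {a..b}" and "{..a} \<inter> {a..b} = {a}"
    using \<open>a \<le> b\<close> by auto
  then show ?thesis
    using absolutely_integrable_on_atMost[OF f] by (simp add: integral_Un)
qed

lemma abs_integral_atMost_le:
  fixes g W :: "real \<Rightarrow> real"
  assumes g: "g absolutely_integrable_on UNIV" and W: "W integrable_on UNIV"
    and le: "\<And>y. \<bar>g y\<bar> \<le> W y"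
  shows "\<bar>integral {..x} g\<bar> \<le> integral UNIV W"
proof -
  have g_x: "g integrable_on {..x}" "(\<lambda>y. \<bar>g y\<bar>) integrable_on {..x}"
    using absolutely_integrable_on_atMost(1)[OF g, of x] by (auto simp: absolutely_integrable_on_def)
  have W_nonneg: "0 \<le> W y" for y
    using le[of y] abs_ge_zero[of "g y"] by linarith
  then have "W absolutely_integrable_on UNIV"
    using W by (intro nonnegative_absolutely_integrable_1)
  then have W_x: "W integrable_on {..x}"
    by (rule absolutely_integrable_on_atMost(2))
  have "\<bar>integral {..x} g\<bar> \<le> integral {..x} (\<lambda>y. \<bar>g y\<bar>)"
    using integral_norm_bound_integral[OF g_x] by simp
  also have "\<dots> \<le> integral {..x} W"
    using g_x(2) W_x le by (rule integral_le)
  also have "\<dots> \<le> integral UNIV W"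
    using W_x W W_nonneg by (intro integral_subset_le) auto
  finally show ?thesis .
qed

lemma continuous_absolutely_integrable_bound:
  fixes f h :: "real \<Rightarrow> real"
  assumes "continuous_on UNIV f" and "h integrable_on UNIV" and "\<And>y. \<bar>f y\<bar> \<le> h y"
  shows "f absolutely_integrable_on UNIV"
  using assms
  by (intro measurable_bounded_by_integrable_imp_absolutely_integrable
      [OF continuous_imp_measurable_on_sets_lebesgue]) auto

lemma tendsto_integral_atMost_at_bot:
  fixes f :: "real \<Rightarrow> real"
  assumes f: "f absolutely_integrable_on UNIV"
  shows "((\<lambda>x. integral {..x} f) \<longlongrightarrow> 0) at_bot"
proof (rule tendsto_at_botI_sequentially)
  fix X :: "nat \<Rightarrow> real" assume X: "filterlim X at_bot sequentially"
  have "(\<lambda>k. integral UNIV (\<lambda>y. if y \<in> {..X k} then f y else 0)) \<longlonglongrightarrow> integral UNIV (\<lambda>y::real. 0::real)"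
  proof (rule dominated_convergence(2)[where h="\<lambda>y. \<bar>f y\<bar>"])
    show "(\<lambda>y. if y \<in> {..X k} then f y else 0) integrable_on UNIV" for k
      using absolutely_integrable_on_atMost[OF f] integrable_restrict_UNIV by blast
    show "(\<lambda>y. \<bar>f y\<bar>) integrable_on UNIV"
      using f by (simp add: absolutely_integrable_on_def)
    show "norm (if y \<in> {..X k} then f y else 0) \<le> \<bar>f y\<bar>" for k y
      by simp
    show "(\<lambda>k. if y \<in> {..X k} then f y else 0) \<longlonglongrightarrow> 0" for y
    proof -
      have "eventually (\<lambda>k. X k < y) sequentially"
        using X filterlim_at_bot_dense by blast
      then have "eventually (\<lambda>k. (if y \<in> {..X k} then f y else 0) = 0) sequentially"
        by eventually_elim auto
      then show ?thesis
        by (rule tendsto_eventually)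
    qed
  qed
  then show "(\<lambda>k. integral {..X k} f) \<longlonglongrightarrow> 0"
    unfolding integral_restrict_UNIV integral_0 .
qed

lemma tendsto_integral_atMost_at_top:
  fixes f :: "real \<Rightarrow> real"
  assumes f: "f absolutely_integrable_on UNIV"
  shows "((\<lambda>x. integral {..x} f) \<longlongrightarrow> integral UNIV f) at_top"
proof (rule tendsto_at_topI_sequentially)
  fix X :: "nat \<Rightarrow> real" assume X: "filterlim X at_top sequentially"
  have "(\<lambda>k. integral UNIV (\<lambda>y. if y \<in> {..X k} then f y else 0)) \<longlonglongrightarrow> integral UNIV f"
  proof (rule dominated_convergence(2)[where h="\<lambda>y. \<bar>f y\<bar>"])
    show "(\<lambda>y. if y \<in> {..X k} then f y else 0) integrable_on UNIV" for k
      using absolutely_integrable_on_atMost[OF f] integrable_restrict_UNIV by blast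
    show "(\<lambda>y. \<bar>f y\<bar>) integrable_on UNIV"
      using f by (simp add: absolutely_integrable_on_def)
    show "norm (if y \<in> {..X k} then f y else 0) \<le> \<bar>f y\<bar>" for k y
      by simp
    show "(\<lambda>k. if y \<in> {..X k} then f y else 0) \<longlonglongrightarrow> f y" for y
    proof -
      have "eventually (\<lambda>k. y < X k) sequentially"
        using X filterlim_at_top_dense by blast
      then have "eventually (\<lambda>k. (if y \<in> {..X k} then f y else 0) = f y) sequentially"
        by eventually_elim auto
      then show ?thesis
        by (rule tendsto_eventually)
    qed
  qed
  then show "(\<lambda>k. integral {..X k} f) \<longlonglongrightarrow> integral UNIV f"
    unfolding integral_restrict_UNIV .
qed

lemma has_real_derivative_integral_atMost:
  fixes f :: "real \<Rightarrow> real"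
  assumes f: "f absolutely_integrable_on UNIV" and cont: "continuous_on UNIV f"
  shows "((\<lambda>u. integral {..u} f) has_real_derivative f x) (at x)"
proof -
  have "((\<lambda>u. integral {x-1..u} f) has_real_derivative f x) (at x within {x-1..x+1})"
    using cont by (intro integral_has_real_derivative) (auto intro: continuous_on_subset)
  then have deriv: "((\<lambda>u. integral {..x-1} f + integral {x-1..u} f) has_real_derivative f x) (at x)"
    using DERIV_add[OF DERIV_const] by (fastforce simp: at_within_Icc_at)
  have split: "integral {..x-1} f + integral {x-1..u} f = integral {..u} f" if "u \<in> {x-1<..}" for u
    using integral_atMost_split[OF f, of "x-1" u] that by simp
  show ?thesis
    by (rule has_field_derivative_transform_within_open[OF deriv, where S="{x-1<..}"])
       (auto simp: split)
qed

lemma integral_atMost_antiderivative: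
  fixes \<phi> \<Phi> :: "real \<Rightarrow> real"
  assumes \<phi>: "\<phi> absolutely_integrable_on UNIV"
    and \<Phi>: "\<And>y. (\<Phi> has_real_derivative \<phi> y) (at y)" and \<Phi>_bot: "(\<Phi> \<longlongrightarrow> 0) at_bot"
  shows "integral {..x} \<phi> = \<Phi> x"
proof -
  have "integral {a..x} \<phi> = \<Phi> x - \<Phi> a" if "a \<le> x" for a
    using fundamental_theorem_of_calculus[OF that, of \<Phi> \<phi>] \<Phi>
    by (auto simp: has_real_derivative_iff_has_vector_derivative
        intro: has_vector_derivative_at_within integral_unique)
  then have "eventually (\<lambda>a. integral {..a} \<phi> + (\<Phi> x - \<Phi> a) = integral {..x} \<phi>) at_bot"
    unfolding eventually_at_bot_linorder
    by (intro exI[of _ x]) (auto simp: integral_atMost_split[OF \<phi>])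
  moreover have "((\<lambda>a. integral {..a} \<phi> + (\<Phi> x - \<Phi> a)) \<longlongrightarrow> 0 + (\<Phi> x - 0)) at_bot"
    by (intro tendsto_intros tendsto_integral_atMost_at_bot[OF \<phi>] \<Phi>_bot)
  ultimately have "((\<lambda>a::real. integral {..x} \<phi>) \<longlongrightarrow> \<Phi> x) at_bot"
    using Lim_transform_eventually by fastforce
  then show ?thesis
    using tendsto_const tendsto_unique trivial_limit_at_bot_linorder by blast
qed

section \<open>Differentiation principles\<close>

lemma tendsto_integral_dominated_at:
  fixes F :: "'a::first_countable_topology \<Rightarrow> real \<Rightarrow> real" and g G :: "real \<Rightarrow> real"
  assumes ev: "eventually (\<lambda>s. F s integrable_on UNIV \<and> (\<forall>y. \<bar>F s y\<bar> \<le> g y)) (at t)"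
    and g: "g integrable_on UNIV"
    and lim: "\<And>y. ((\<lambda>s. F s y) \<longlongrightarrow> G y) (at t)"
  shows "((\<lambda>s. integral UNIV (F s)) \<longlongrightarrow> integral UNIV G) (at t)"
  unfolding tendsto_at_iff_sequentially comp_def
proof (intro allI impI)
  fix X :: "nat \<Rightarrow> 'a" assume "\<forall>i. X i \<in> UNIV - {t}" and "X \<longlonglongrightarrow> t"
  then have X: "filterlim X (at t) sequentially"
    by (simp add: filterlim_at)
  obtain N where N: "\<And>n. n \<ge> N \<Longrightarrow> F (X n) integrable_on UNIV \<and> (\<forall>y. \<bar>F (X n) y\<bar> \<le> g y)"
    using eventually_compose_filterlim[OF ev X] unfolding eventually_sequentially by blast
  have "(\<lambda>k. integral UNIV (F (X (k + N)))) \<longlonglongrightarrow> integral UNIV G"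
  proof (rule dominated_convergence(2)[OF _ g])
    show "(\<lambda>k. F (X (k + N)) y) \<longlonglongrightarrow> G y" for y
      using LIMSEQ_ignore_initial_segment[OF filterlim_compose[OF lim X]] .
  qed (use N in simp_all)
  then show "(\<lambda>n. integral UNIV (F (X n))) \<longlonglongrightarrow> integral UNIV G"
    by (rule LIMSEQ_offset)
qed

lemma has_real_derivative_remainder_bound:
  fixes F E :: "real \<Rightarrow> real"
  assumes bound: "eventually (\<lambda>s. \<bar>F s - F t - D * (s - t)\<bar> \<le> E s) (at t)"
    and E: "((\<lambda>s. E s / \<bar>s - t\<bar>) \<longlongrightarrow> 0) (at t)"
  shows "(F has_real_derivative D) (at t)"
proof -
  have "eventually (\<lambda>s. norm ((F s - F t) / (s - t) - D) \<le> E s / \<bar>s - t\<bar>) (at t)"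
    using bound eventually_neq_at_within[of t t UNIV]
  proof eventually_elim
    case (elim s)
    then have "(F s - F t) / (s - t) - D = (F s - F t - D * (s - t)) / (s - t)"
      by (simp add: field_simps)
    with elim show ?case
      by (simp add: abs_divide divide_right_mono)
  qed
  from Lim_null_comparison[OF this E] show ?thesis
    by (simp add: has_field_derivative_iff Lim_null[where l=D])
qed

text \<open>Danskin's envelope principle.\<close>

lemma has_real_derivative_envelope:
  fixes K :: "real \<Rightarrow> real \<Rightarrow> real" and L X A c \<omega> :: "real \<Rightarrow> real"
  assumes le: "eventually (\<lambda>s. \<forall>x. K x s \<le> L s) (nhds t)"
    and attained: "eventually (\<lambda>s. K (X s) s = L s) (nhds t)"
    and remainder: "eventually (\<lambda>s. \<forall>x. \<bar>K x s - K x t - A x * (s - t)\<bar> \<le> c x * \<omega> s) (at t)"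
    and \<omega>: "((\<lambda>s. \<omega> s / \<bar>s - t\<bar>) \<longlongrightarrow> 0) (at t)"
    and X: "(X \<longlongrightarrow> X t) (at t)" and A: "isCont A (X t)" and c: "isCont c (X t)"
  shows "(L has_real_derivative A (X t)) (at t)"
proof (rule has_real_derivative_remainder_bound)
  define E where "E s = (c (X t) + c (X s)) * \<omega> s + \<bar>A (X s) - A (X t)\<bar> * \<bar>s - t\<bar>" for s
  have le_t: "\<forall>x. K x t \<le> L t" and attained_t: "K (X t) t = L t"
    using eventually_nhds_x_imp_x[OF le] eventually_nhds_x_imp_x[OF attained] by auto
  show "eventually (\<lambda>s. \<bar>L s - L t - A (X t) * (s - t)\<bar> \<le> E s) (at t)"
    using le attained remainder unfolding eventually_at_filter
  proof eventually_elim
    case (elim s)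
    show ?case
    proof (intro impI)
      assume "s \<noteq> t"
      with elim have "\<forall>x. \<bar>K x s - K x t - A x * (s - t)\<bar> \<le> c x * \<omega> s"
        by blast
      then have "\<bar>K (X t) s - K (X t) t - A (X t) * (s - t)\<bar> \<le> c (X t) * \<omega> s"
        and "\<bar>K (X s) s - K (X s) t - A (X s) * (s - t)\<bar> \<le> c (X s) * \<omega> s"
        by blast+
      moreover have "K (X t) s \<le> L s" and "K (X s) s = L s"
        using elim by blast+
      moreover have "A (X s) * (s - t) - A (X t) * (s - t) \<le> \<bar>A (X s) - A (X t)\<bar> * \<bar>s - t\<bar>"
        by (metis abs_ge_self abs_mult left_diff_distrib)
      moreover have "K (X s) t \<le> L t"
        using le_t by blast
      ultimately show "\<bar>L s - L t - A (X t) * (s - t)\<bar> \<le> E s"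
        unfolding E_def distrib_right abs_le_iff using attained_t
          mult_nonneg_nonneg[OF abs_ge_zero abs_ge_zero, of "A (X s) - A (X t)" "s - t"]
        by (elim conjE) (intro conjI; linarith)
    qed
  qed
  have "((\<lambda>s. (c (X t) + c (X s)) * (\<omega> s / \<bar>s - t\<bar>) + \<bar>A (X s) - A (X t)\<bar>)
          \<longlongrightarrow> (c (X t) + c (X t)) * 0 + \<bar>A (X t) - A (X t)\<bar>) (at t)"
    by (intro tendsto_intros \<omega> isCont_tendsto_compose[OF c X] isCont_tendsto_compose[OF A X])
  moreover have "eventually (\<lambda>s. (c (X t) + c (X s)) * (\<omega> s / \<bar>s - t\<bar>) + \<bar>A (X s) - A (X t)\<bar>
      = E s / \<bar>s - t\<bar>) (at t)"
    using eventually_neq_at_within[of t t UNIV]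
    by eventually_elim (simp add: E_def add_divide_distrib)
  ultimately show "((\<lambda>s. E s / \<bar>s - t\<bar>) \<longlongrightarrow> 0) (at t)"
    using Lim_transform_eventually by fastforce
qed

lemma abs_first_order_remainder_le:
  fixes g g' :: "real \<Rightarrow> real"
  assumes deriv: "\<And>r. r \<in> S \<Longrightarrow> (g has_real_derivative g' r) (at r)"
    and bound: "\<And>r. r \<in> S \<Longrightarrow> \<bar>g' r\<bar> \<le> B"
    and S: "convex S" "s \<in> S" "t \<in> S"
  shows "\<bar>g s - g t - (s - t) * g' t\<bar> \<le> 2 * B * \<bar>s - t\<bar>"
proof -
  have "norm (g s - g t) \<le> B * norm (s - t)"
  proof (rule field_differentiable_bound[OF S(1) _ _ S(2,3)])
    show "(g has_field_derivative g' r) (at r within S)" if "r \<in> S" for r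
      using deriv[OF that] by (rule has_field_derivative_at_within)
    show "norm (g' r) \<le> B" if "r \<in> S" for r
      using bound[OF that] by simp
  qed
  then have "\<bar>g s - g t\<bar> \<le> B * \<bar>s - t\<bar>"
    by simp
  moreover have "\<bar>(s - t) * g' t\<bar> \<le> B * \<bar>s - t\<bar>"
    using mult_right_mono[OF bound[OF S(3)] abs_ge_zero[of "s - t"]] by (simp add: abs_mult mult.commute)
  ultimately show ?thesis
    by linarith
qed

lemma tendsto_integral_taylor_remainder:
  fixes u u' :: "real \<Rightarrow> real \<Rightarrow> real" and h :: "real \<Rightarrow> real"
  assumes "0 < \<epsilon>"
    and deriv: "\<And>y s. \<bar>s - t\<bar> < \<epsilon> \<Longrightarrow> (u y has_real_derivative u' y s) (at s)"
    and bound: "\<And>y s. \<bar>s - t\<bar> < \<epsilon> \<Longrightarrow> \<bar>u' y s\<bar> \<le> h y"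
    and h: "h integrable_on UNIV"
    and u: "\<And>s. \<bar>s - t\<bar> < \<epsilon> \<Longrightarrow> (\<lambda>y. u y s) absolutely_integrable_on UNIV"
    and u': "(\<lambda>y. u' y t) absolutely_integrable_on UNIV"
  shows "((\<lambda>s. integral UNIV (\<lambda>y. \<bar>u y s - u y t - (s - t) * u' y t\<bar>) / \<bar>s - t\<bar>) \<longlongrightarrow> 0) (at t)"
proof -
  define F where "F s y = \<bar>u y s - u y t - (s - t) * u' y t\<bar> / \<bar>s - t\<bar>" for s y
  have "((\<lambda>s. integral UNIV (F s)) \<longlongrightarrow> integral UNIV (\<lambda>y::real. 0::real)) (at t)"
  proof (rule tendsto_integral_dominated_at[where g="\<lambda>y. 2 * h y"])
    have "eventually (\<lambda>s. \<bar>s - t\<bar> < \<epsilon>) (at t)"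
      using \<open>0 < \<epsilon>\<close> by (auto simp: eventually_at dist_real_def)
    then show "eventually (\<lambda>s. F s integrable_on UNIV \<and> (\<forall>y. \<bar>F s y\<bar> \<le> 2 * h y)) (at t)"
      using eventually_neq_at_within[of t t UNIV]
    proof eventually_elim
      case (elim s)
      have "(\<lambda>y. u y s - u y t - (s - t) * u' y t) absolutely_integrable_on UNIV"
        using u elim \<open>0 < \<epsilon>\<close> u' by (intro set_integral_diff(1) set_integrable_mult_right) auto
      then have "F s integrable_on UNIV"
        unfolding F_def by (intro integrable_on_divide) (simp add: absolutely_integrable_on_def)
      moreover have "\<bar>F s y\<bar> \<le> 2 * h y" for y
      proof -
        have "\<bar>u y s - u y t - (s - t) * u' y t\<bar> \<le> 2 * h y * \<bar>s - t\<bar>"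
          using deriv bound elim \<open>0 < \<epsilon>\<close>
          by (intro abs_first_order_remainder_le[where S="{t - \<epsilon><..<t + \<epsilon>}"]) (auto simp: abs_less_iff)
        with elim show ?thesis
          by (simp add: F_def divide_le_eq)
      qed
      ultimately show ?case
        by blast
    qed
    show "(\<lambda>y. 2 * h y) integrable_on UNIV"
      using integrable_on_cmult_left[OF h, of 2] by simp
    show "((\<lambda>s. F s y) \<longlongrightarrow> 0) (at t)" for y
    proof -
      have "((\<lambda>s. (u y s - u y t) / (s - t)) \<longlongrightarrow> u' y t) (at t)"
        using deriv[of t y] \<open>0 < \<epsilon>\<close> by (simp add: has_field_derivative_iff)
      then have "((\<lambda>s. \<bar>(u y s - u y t) / (s - t) - u' y t\<bar>) \<longlongrightarrow> \<bar>u' y t - u' y t\<bar>) (at t)"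
        by (intro tendsto_intros)
      moreover have "eventually (\<lambda>s. \<bar>(u y s - u y t) / (s - t) - u' y t\<bar> = F s y) (at t)"
        using eventually_neq_at_within[of t t UNIV]
        by eventually_elim (simp add: F_def abs_divide[symmetric] diff_divide_distrib)
      ultimately show ?thesis
        using Lim_transform_eventually by fastforce
    qed
  qed
  then show ?thesis
    unfolding F_def integral_divide integral_0 .
qed

section \<open>The Lorenz curve of a positive density\<close>

text \<open>The tangent to the convex Lorenz curve at its point $(F(x,t), L(x,t))$, evaluated at
  abscissa $f$.\<close>

definition lorenz_tangent :: "(real \<Rightarrow> real \<Rightarrow> real) \<Rightarrow> real \<Rightarrow> real \<Rightarrow> real \<Rightarrow> real" where
  "lorenz_tangent \<rho> x f t = pmom \<rho> x t + x * (f - cdf \<rho> x t)"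

locale density_slice =
  fixes \<rho> :: "real \<Rightarrow> real \<Rightarrow> real" and t :: real
  assumes density: "Pac_pos (dens \<rho> t)"
    and first_moment: "finite_first_moment (dens \<rho> t)"
    and continuous_density: "continuous_on UNIV (\<lambda>x. \<rho> x t)"
begin

lemma density_pos: "0 < \<rho> x t"
  and density_integrable: "(\<lambda>x. \<rho> x t) absolutely_integrable_on UNIV"
  and density_total: "integral UNIV (\<lambda>x. \<rho> x t) = 1"
  and moment_integrable: "(\<lambda>x. x * \<rho> x t) absolutely_integrable_on UNIV"
  using density first_moment by (auto simp: Pac_pos_def finite_first_moment_def dens_def)

lemma cdf_has_real_derivative: "((\<lambda>x. cdf \<rho> x t) has_real_derivative \<rho> x t) (at x)"
  unfolding cdf_def by (rule has_real_derivative_integral_atMost[OF density_integrable continuous_density])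

lemma pmom_has_real_derivative: "((\<lambda>x. pmom \<rho> x t) has_real_derivative x * \<rho> x t) (at x)"
  unfolding pmom_def
  by (intro has_real_derivative_integral_atMost moment_integrable continuous_intros continuous_density)

lemma continuous_on_cdf: "continuous_on S (\<lambda>x. cdf \<rho> x t)"
  using cdf_has_real_derivative by (meson DERIV_isCont continuous_at_imp_continuous_on)

lemma strict_mono_cdf: "strict_mono (\<lambda>x. cdf \<rho> x t)"
proof (rule strict_monoI)
  fix a b :: real
  assume "a < b"
  then show "cdf \<rho> a t < cdf \<rho> b t"
    by (rule DERIV_pos_imp_increasing) (use cdf_has_real_derivative density_pos in blast)
qed

lemma cdf_less_iff: "cdf \<rho> a t < cdf \<rho> b t \<longleftrightarrow> a < b"
  using strict_mono_less[OF strict_mono_cdf] .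

lemma cdf_le_iff: "cdf \<rho> a t \<le> cdf \<rho> b t \<longleftrightarrow> a \<le> b"
  using strict_mono_less_eq[OF strict_mono_cdf] .

lemma cdf_eq_iff: "cdf \<rho> a t = cdf \<rho> b t \<longleftrightarrow> a = b"
  using strict_mono_eq[OF strict_mono_cdf] .

lemma tendsto_cdf_at_bot: "((\<lambda>x. cdf \<rho> x t) \<longlongrightarrow> 0) at_bot"
  unfolding cdf_def by (rule tendsto_integral_atMost_at_bot[OF density_integrable])

lemma tendsto_cdf_at_top: "((\<lambda>x. cdf \<rho> x t) \<longlongrightarrow> 1) at_top"
  using tendsto_integral_atMost_at_top[OF density_integrable] by (simp add: cdf_def density_total)

lemma cdf_pos: "0 < cdf \<rho> x t"
proof -
  have "0 \<le> cdf \<rho> (x - 1) t"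
    unfolding cdf_def using absolutely_integrable_on_atMost(2)[OF density_integrable] density_pos
    by (intro integral_nonneg) (auto intro: less_imp_le)
  also have "\<dots> < cdf \<rho> x t"
    by (simp add: cdf_less_iff)
  finally show ?thesis .
qed

lemma cdf_less_1: "cdf \<rho> x t < 1"
proof -
  have "cdf \<rho> x t < cdf \<rho> (x + 1) t"
    by (simp add: cdf_less_iff)
  also have "\<dots> \<le> integral UNIV (\<lambda>x. \<rho> x t)"
    unfolding cdf_def
  proof (rule integral_subset_le)
    show "(\<lambda>x. \<rho> x t) integrable_on UNIV"
      using density_integrable by (simp add: absolutely_integrable_on_def)
  qed (auto intro: absolutely_integrable_on_atMost(2)[OF density_integrable] less_imp_le[OF density_pos])
  finally show ?thesis
    by (simp add: density_total)
qed

lemma cdf_surj: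
  assumes "0 < f" "f < 1"
  obtains x where "cdf \<rho> x t = f"
proof -
  obtain a where a: "cdf \<rho> a t < f"
    using order_tendstoD(2)[OF tendsto_cdf_at_bot \<open>0 < f\<close>] by (auto simp: eventually_at_bot_linorder)
  obtain b where b: "f < cdf \<rho> b t"
    using order_tendstoD(1)[OF tendsto_cdf_at_top \<open>f < 1\<close>] by (auto simp: eventually_at_top_linorder)
  have "a \<le> b"
    using a b cdf_le_iff[of b a] by linarith
  then have "\<exists>x. a \<le> x \<and> x \<le> b \<and> cdf \<rho> x t = f"
    using a b by (intro IVT' continuous_on_cdf) auto
  then show ?thesis
    using that by blast
qed

lemma quantile_cdf: "quantile \<rho> (cdf \<rho> x t) t = x"
  unfolding quantile_def by (rule the_equality) (auto simp: cdf_eq_iff)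

lemma cdf_quantile:
  assumes "0 < f" "f < 1"
  shows "cdf \<rho> (quantile \<rho> f t) t = f"
proof -
  obtain x where "cdf \<rho> x t = f"
    using cdf_surj[OF assms] .
  then show ?thesis
    using quantile_cdf by metis
qed

lemma isCont_quantile:
  assumes "0 < f" "f < 1"
  shows "isCont (\<lambda>g. quantile \<rho> g t) f"
proof -
  have "isCont (\<lambda>g. quantile \<rho> g t) (cdf \<rho> (quantile \<rho> f t) t)"
  proof (rule isCont_inverse_function[where f="\<lambda>x. cdf \<rho> x t" and d=1])
    show "quantile \<rho> (cdf \<rho> z t) t = z" for z
      by (rule quantile_cdf)
    show "isCont (\<lambda>x. cdf \<rho> x t) z" for z
      using cdf_has_real_derivative by (rule DERIV_isCont)
  qed simp
  then show ?thesis
    by (simp add: cdf_quantile[OF assms])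
qed

lemma quantile_has_real_derivative:
  assumes "0 < f" "f < 1"
  shows "((\<lambda>g. quantile \<rho> g t) has_real_derivative inverse (\<rho> (quantile \<rho> f t) t)) (at f)"
proof (rule DERIV_inverse_function[where f="\<lambda>x. cdf \<rho> x t" and a=0 and b=1])
  show "((\<lambda>x. cdf \<rho> x t) has_real_derivative \<rho> (quantile \<rho> f t) t) (at (quantile \<rho> f t))"
    by (rule cdf_has_real_derivative)
  show "\<rho> (quantile \<rho> f t) t \<noteq> 0"
    using density_pos less_imp_neq by metis
  show "cdf \<rho> (quantile \<rho> g t) t = g" if "0 < g" "g < 1" for g
    using that by (rule cdf_quantile)
  show "isCont (\<lambda>g. quantile \<rho> g t) f"
    using assms by (rule isCont_quantile)
qed (use assms in auto)

lemma filterlim_quantile_at_right_0: "filterlim (\<lambda>g. quantile \<rho> g t) at_bot (at_right 0)"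
  unfolding filterlim_at_bot_dense eventually_at_right_field
proof (intro allI exI conjI impI)
  fix Z g :: real
  assume "0 < g" "g < cdf \<rho> Z t"
  then have "cdf \<rho> (quantile \<rho> g t) t < cdf \<rho> Z t"
    using cdf_quantile[of g] cdf_less_1[of Z] by simp
  then show "quantile \<rho> g t < Z"
    by (simp add: cdf_less_iff)
qed (rule cdf_pos)

lemma lorenz_has_real_derivative:
  assumes "0 < f" "f < 1"
  shows "((\<lambda>g. lorenz \<rho> g t) has_real_derivative quantile \<rho> f t) (at f)"
proof -
  have "((\<lambda>g. pmom \<rho> (quantile \<rho> g t) t) has_real_derivative
      quantile \<rho> f t * \<rho> (quantile \<rho> f t) t * inverse (\<rho> (quantile \<rho> f t) t)) (at f)"
    by (rule DERIV_chain2[OF pmom_has_real_derivative quantile_has_real_derivative[OF assms]])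
  moreover have "quantile \<rho> f t * \<rho> (quantile \<rho> f t) t * inverse (\<rho> (quantile \<rho> f t) t)
      = quantile \<rho> f t"
    using density_pos[of "quantile \<rho> f t"] by (simp add: field_simps)
  ultimately show ?thesis
    by (simp add: lorenz_def[abs_def])
qed

lemma deriv_lorenz:
  assumes "0 < f" "f < 1"
  shows "deriv (\<lambda>g. lorenz \<rho> g t) f = quantile \<rho> f t"
  using lorenz_has_real_derivative[OF assms] by (rule DERIV_imp_deriv)

lemma deriv2_lorenz:
  assumes "0 < f" "f < 1"
  shows "deriv (deriv (\<lambda>g. lorenz \<rho> g t)) f = inverse (\<rho> (quantile \<rho> f t) t)"
proof -
  have "(deriv (\<lambda>g. lorenz \<rho> g t) has_real_derivative inverse (\<rho> (quantile \<rho> f t) t)) (at f)"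
    by (rule has_field_derivative_transform_within_open[OF quantile_has_real_derivative[OF assms],
          where S="{0<..<1}"]) (use assms deriv_lorenz in auto)
  then show ?thesis
    by (rule DERIV_imp_deriv)
qed

lemma density_eq_lorenz: "(\<lambda>x. 1 / deriv (deriv (\<lambda>g. lorenz \<rho> g t)) (cdf \<rho> x t)) = dens \<rho> t"
  using deriv2_lorenz[OF cdf_pos cdf_less_1] by (simp add: quantile_cdf dens_def divide_inverse)

lemma lorenz_tangent_has_real_derivative:
  "((\<lambda>x. lorenz_tangent \<rho> x f t) has_real_derivative f - cdf \<rho> x t) (at x)"
proof -
  have "((\<lambda>x. pmom \<rho> x t + x * (f - cdf \<rho> x t)) has_real_derivative
      x * \<rho> x t + (1 * (f - cdf \<rho> x t) + (0 - \<rho> x t) * x)) (at x)"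
    by (intro DERIV_add DERIV_mult DERIV_diff DERIV_ident DERIV_const
        pmom_has_real_derivative cdf_has_real_derivative)
  then show ?thesis
    by (simp add: lorenz_tangent_def[abs_def] algebra_simps)
qed

lemma lorenz_tangent_quantile:
  assumes "0 < f" "f < 1"
  shows "lorenz_tangent \<rho> (quantile \<rho> f t) f t = lorenz \<rho> f t"
  by (simp add: lorenz_tangent_def lorenz_def cdf_quantile[OF assms])

text \<open>The tangent at $x$ has slope $f - F(x,t)$ in $x$, which changes sign at $x = G(f,t)$.\<close>

lemma lorenz_tangent_le_lorenz:
  assumes f: "0 < f" "f < 1"
  shows "lorenz_tangent \<rho> x f t \<le> lorenz \<rho> f t"
proof -
  define G where "G = quantile \<rho> f t"
  have cont: "continuous_on S (\<lambda>x. lorenz_tangent \<rho> x f t)" for S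
    using lorenz_tangent_has_real_derivative by (meson DERIV_isCont continuous_at_imp_continuous_on)
  have cdf_G: "cdf \<rho> G t = f"
    unfolding G_def using f by (rule cdf_quantile)
  have "lorenz_tangent \<rho> x f t \<le> lorenz_tangent \<rho> G f t"
  proof (cases "x \<le> G")
    case True
    then show ?thesis
    proof (rule DERIV_nonneg_imp_increasing_open[OF _ _ cont])
      fix z assume "x < z" "z < G"
      then have "cdf \<rho> z t \<le> f"
        using cdf_G cdf_le_iff[of z G] by simp
      then show "\<exists>y. ((\<lambda>x. lorenz_tangent \<rho> x f t) has_real_derivative y) (at z) \<and> 0 \<le> y"
        by (intro exI[of _ "f - cdf \<rho> z t"]) (simp add: lorenz_tangent_has_real_derivative)
    qed
  next
    case False
    then have "G \<le> x"
      by simp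
    then show ?thesis
    proof (rule DERIV_nonpos_imp_decreasing_open[OF _ _ cont])
      fix z assume "G < z" "z < x"
      then have "f \<le> cdf \<rho> z t"
        using cdf_G cdf_le_iff[of G z] by simp
      then show "\<exists>y. ((\<lambda>x. lorenz_tangent \<rho> x f t) has_real_derivative y) (at z) \<and> y \<le> 0"
        by (intro exI[of _ "f - cdf \<rho> z t"]) (simp add: lorenz_tangent_has_real_derivative)
    qed
  qed
  then show ?thesis
    using lorenz_tangent_quantile[OF f] by (simp add: G_def)
qed

lemma has_integral_quantile_substitution:
  fixes \<Psi> \<phi> \<psi> :: "real \<Rightarrow> real"
  assumes \<Psi>: "\<And>x. (\<Psi> has_real_derivative \<phi> x * \<rho> x t) (at x)" and \<Psi>_bot: "(\<Psi> \<longlongrightarrow> 0) at_bot"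
    and f: "0 < f" "f < 1"
    and \<psi>: "\<And>g. 0 < g \<Longrightarrow> g < f \<Longrightarrow> \<psi> g = \<phi> (quantile \<rho> g t)"
  shows "(\<psi> has_integral \<Psi> (quantile \<rho> f t)) {0..f}"
proof -
  define \<Phi> where "\<Phi> g = (if g \<le> 0 then 0 else \<Psi> (quantile \<rho> g t))" for g
  have \<Phi>_deriv: "(\<Phi> has_real_derivative \<phi> (quantile \<rho> g t)) (at g)" if g: "0 < g" "g < 1" for g
  proof -
    define G where "G = quantile \<rho> g t"
    have "((\<lambda>g. \<Psi> (quantile \<rho> g t)) has_real_derivative \<phi> G * \<rho> G t * inverse (\<rho> G t)) (at g)"
      unfolding G_def by (rule DERIV_chain2[OF \<Psi> quantile_has_real_derivative[OF g]])
    moreover have "\<phi> G * \<rho> G t * inverse (\<rho> G t) = \<phi> G"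
      using density_pos[of G] by (simp add: field_simps)
    ultimately have "((\<lambda>g. \<Psi> (quantile \<rho> g t)) has_real_derivative \<phi> G) (at g)"
      by simp
    then show ?thesis
      unfolding G_def
      by (rule has_field_derivative_transform_within_open[where S="{0<..}"]) (use g in \<open>auto simp: \<Phi>_def\<close>)
  qed
  have \<Phi>_at_0: "(\<Phi> \<longlongrightarrow> \<Phi> 0) (at_right 0)"
  proof -
    have "((\<lambda>g. \<Psi> (quantile \<rho> g t)) \<longlongrightarrow> 0) (at_right 0)"
      by (rule filterlim_compose[OF \<Psi>_bot filterlim_quantile_at_right_0])
    moreover have "eventually (\<lambda>g. \<Psi> (quantile \<rho> g t) = \<Phi> g) (at_right (0::real))"
      using eventually_at_right_less[of 0] by eventually_elim (simp add: \<Phi>_def)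
    ultimately have "(\<Phi> \<longlongrightarrow> 0) (at_right 0)"
      by (rule Lim_transform_eventually)
    then show ?thesis
      by (simp add: \<Phi>_def)
  qed
  have "continuous_on {0..f} \<Phi>"
    unfolding continuous_on_eq_continuous_within
  proof
    fix g assume g: "g \<in> {0..f}"
    show "continuous (at g within {0..f}) \<Phi>"
    proof (cases "g = 0")
      case True
      then show ?thesis
        using \<Phi>_at_0 f by (simp add: continuous_within at_within_Icc_at_right)
    next
      case False
      with g f have "isCont \<Phi> g"
        using \<Phi>_deriv[THEN DERIV_isCont] by simp
      then show ?thesis
        by (rule continuous_at_imp_continuous_within)
    qed
  qed
  then have "(\<psi> has_integral \<Phi> f - \<Phi> 0) {0..f}"
  proof (rule fundamental_theorem_of_calculus_interior[OF less_imp_le[OF f(1)]])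
    fix g assume "g \<in> {0<..<f}"
    then show "(\<Phi> has_vector_derivative \<psi> g) (at g)"
      using \<Phi>_deriv[of g] \<psi>[of g] f by (simp add: has_real_derivative_iff_has_vector_derivative)
  qed
  then show ?thesis
    using f by (simp add: \<Phi>_def)
qed

end

section \<open>Time derivative of the Lorenz curve\<close>

locale density_flow =
  fixes \<rho> :: "real \<Rightarrow> real \<Rightarrow> real"
  assumes slice_density: "\<And>t. 0 < t \<Longrightarrow> Pac_pos (dens \<rho> t) \<and> finite_first_moment (dens \<rho> t)"
    and continuous_rho: "continuous_on (UNIV \<times> {0<..}) (\<lambda>(x, t). \<rho> x t)"
    and differentiable_rho_t: "\<And>x t. 0 < t \<Longrightarrow> (\<lambda>s. \<rho> x s) differentiable (at t)"
    and continuous_rho_t: "continuous_on (UNIV \<times> {0<..}) (\<lambda>(x, t). deriv (\<lambda>s. \<rho> x s) t)"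
    and dominated_rho_t: "\<And>t. 0 < t \<Longrightarrow> \<exists>\<epsilon> h. 0 < \<epsilon> \<and> \<epsilon> < t \<and> h absolutely_integrable_on UNIV \<and>
         (\<forall>s. \<bar>s - t\<bar> < \<epsilon> \<longrightarrow> (\<forall>y. (1 + \<bar>y\<bar>) * \<bar>deriv (\<lambda>r. \<rho> y r) s\<bar> \<le> h y))"
begin

abbreviation \<rho>' :: "real \<Rightarrow> real \<Rightarrow> real" where
  "\<rho>' y t \<equiv> deriv (\<lambda>s. \<rho> y s) t"

text \<open>$\partial_t L(x,t) - x\,\partial_t F(x,t)$, the time derivative of the tangent
  \<^const>\<open>lorenz_tangent\<close> at fixed $x$ and $f$.\<close>

definition tangent_rate :: "real \<Rightarrow> real \<Rightarrow> real" where
  "tangent_rate x t = integral {..x} (\<lambda>y. y * \<rho>' y t) - x * integral {..x} (\<lambda>y. \<rho>' y t)"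

definition taylor_remainder :: "real \<Rightarrow> real \<Rightarrow> real" where
  "taylor_remainder s t = integral UNIV (\<lambda>y. (1 + \<bar>y\<bar>) * \<bar>\<rho> y s - \<rho> y t - (s - t) * \<rho>' y t\<bar>)"

lemma continuous_on_slice:
  assumes "0 < t"
  shows "continuous_on UNIV (\<lambda>y. \<rho> y t)" and "continuous_on UNIV (\<lambda>y. \<rho>' y t)"
proof -
  have "continuous_on UNIV (\<lambda>y. (\<lambda>(x, t). \<rho> x t) (y, t))"
    by (rule continuous_on_compose2[OF continuous_rho]) (use assms in \<open>auto intro!: continuous_intros\<close>)
  moreover have "continuous_on UNIV (\<lambda>y. (\<lambda>(x, t). \<rho>' x t) (y, t))"
    by (rule continuous_on_compose2[OF continuous_rho_t]) (use assms in \<open>auto intro!: continuous_intros\<close>)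
  ultimately show "continuous_on UNIV (\<lambda>y. \<rho> y t)" and "continuous_on UNIV (\<lambda>y. \<rho>' y t)"
    by simp_all
qed

lemma density_slice:
  assumes "0 < t"
  shows "density_slice \<rho> t"
  using slice_density[OF assms] continuous_on_slice(1)[OF assms] by unfold_locales auto

lemma rho_has_real_derivative:
  assumes "0 < t"
  shows "((\<lambda>s. \<rho> y s) has_real_derivative \<rho>' y t) (at t)"
  using differentiable_rho_t[OF assms] by (simp add: DERIV_deriv_iff_real_differentiable)

lemma weighted_rho_integrable:
  assumes "0 < t" and w: "continuous_on UNIV w" "\<And>y. \<bar>w y\<bar> \<le> 1 + \<bar>y\<bar>"
  shows "(\<lambda>y. w y * \<rho> y t) absolutely_integrable_on UNIV"
proof -
  interpret density_slice \<rho> t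
    using density_slice[OF \<open>0 < t\<close>] .
  have "(\<lambda>y. \<rho> y t + \<bar>y * \<rho> y t\<bar>) integrable_on UNIV"
    using density_integrable moment_integrable
    by (intro integrable_add) (auto simp: absolutely_integrable_on_def)
  moreover have "\<bar>w y * \<rho> y t\<bar> \<le> \<rho> y t + \<bar>y * \<rho> y t\<bar>" for y
    using mult_right_mono[OF w(2) less_imp_le[OF density_pos]] density_pos[of y]
    by (simp add: abs_mult distrib_right)
  ultimately show ?thesis
    using w continuous_on_slice(1)[OF \<open>0 < t\<close>]
    by (intro continuous_absolutely_integrable_bound continuous_intros)
qed

lemma weighted_rho_t_integrable:
  assumes "0 < t" and w: "continuous_on UNIV w" "\<And>y. \<bar>w y\<bar> \<le> 1 + \<bar>y\<bar>"
  shows "(\<lambda>y. w y * \<rho>' y t) absolutely_integrable_on UNIV"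
proof -
  obtain \<epsilon> h where "0 < \<epsilon>" and h: "h absolutely_integrable_on UNIV"
    and "\<forall>s. \<bar>s - t\<bar> < \<epsilon> \<longrightarrow> (\<forall>y. (1 + \<bar>y\<bar>) * \<bar>\<rho>' y s\<bar> \<le> h y)"
    using dominated_rho_t[OF \<open>0 < t\<close>] by blast
  then have bound: "(1 + \<bar>y\<bar>) * \<bar>\<rho>' y t\<bar> \<le> h y" for y
    by simp
  have "\<bar>w y * \<rho>' y t\<bar> \<le> h y" for y
    using mult_right_mono[OF w(2)[of y] abs_ge_zero[of "\<rho>' y t"]] bound[of y] by (simp add: abs_mult)
  with h show ?thesis
    using w continuous_on_slice(2)[OF \<open>0 < t\<close>]
    by (intro continuous_absolutely_integrable_bound[where h=h] continuous_intros)
       (auto simp: absolutely_integrable_on_def)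
qed

lemma weighted_remainder_integrable:
  assumes "0 < s" "0 < t" and w: "continuous_on UNIV w" "\<And>y. \<bar>w y\<bar> \<le> 1 + \<bar>y\<bar>"
  shows "(\<lambda>y. w y * (\<rho> y s - \<rho> y t - (s - t) * \<rho>' y t)) absolutely_integrable_on UNIV"
proof -
  have "(\<lambda>y. w y * \<rho> y s - w y * \<rho> y t - (s - t) * (w y * \<rho>' y t)) absolutely_integrable_on UNIV"
    using assms
    by (intro set_integral_diff(1) set_integrable_mult_right weighted_rho_integrable weighted_rho_t_integrable)
  then show ?thesis
    by (simp add: algebra_simps)
qed

lemma integral_atMost_weighted_remainder:
  assumes "0 < s" "0 < t" and w: "continuous_on UNIV w" "\<And>y. \<bar>w y\<bar> \<le> 1 + \<bar>y\<bar>"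
  shows "integral {..x} (\<lambda>y. w y * (\<rho> y s - \<rho> y t - (s - t) * \<rho>' y t)) =
    integral {..x} (\<lambda>y. w y * \<rho> y s) - integral {..x} (\<lambda>y. w y * \<rho> y t)
      - (s - t) * integral {..x} (\<lambda>y. w y * \<rho>' y t)"
proof -
  have int: "(\<lambda>y. w y * \<rho> y s) integrable_on {..x}" "(\<lambda>y. w y * \<rho> y t) integrable_on {..x}"
    "(\<lambda>y. w y * \<rho>' y t) integrable_on {..x}"
    using assms by (intro absolutely_integrable_on_atMost(2) weighted_rho_integrable
        weighted_rho_t_integrable; simp)+
  have "integral {..x} (\<lambda>y. w y * (\<rho> y s - \<rho> y t - (s - t) * \<rho>' y t)) =
      integral {..x} (\<lambda>y. w y * \<rho> y s - w y * \<rho> y t - (s - t) * (w y * \<rho>' y t))"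
    by (simp add: algebra_simps)
  also have "\<dots> = integral {..x} (\<lambda>y. w y * \<rho> y s) - integral {..x} (\<lambda>y. w y * \<rho> y t)
      - (s - t) * integral {..x} (\<lambda>y. w y * \<rho>' y t)"
    using int by (simp add: integral_diff integrable_diff integrable_on_mult_right)
  finally show ?thesis .
qed

lemma abs_integral_atMost_weighted_remainder_le:
  assumes "0 < s" "0 < t" and w: "continuous_on UNIV w" "\<And>y. \<bar>w y\<bar> \<le> 1 + \<bar>y\<bar>"
  shows "\<bar>integral {..x} (\<lambda>y. w y * (\<rho> y s - \<rho> y t - (s - t) * \<rho>' y t))\<bar> \<le> taylor_remainder s t"
  unfolding taylor_remainder_def
proof (rule abs_integral_atMost_le)
  show "(\<lambda>y. w y * (\<rho> y s - \<rho> y t - (s - t) * \<rho>' y t)) absolutely_integrable_on UNIV"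
    using assms by (rule weighted_remainder_integrable)
  have "(\<lambda>y. (1 + \<bar>y\<bar>) * (\<rho> y s - \<rho> y t - (s - t) * \<rho>' y t)) absolutely_integrable_on UNIV"
    using assms by (intro weighted_remainder_integrable continuous_intros) auto
  then show "(\<lambda>y. (1 + \<bar>y\<bar>) * \<bar>\<rho> y s - \<rho> y t - (s - t) * \<rho>' y t\<bar>) integrable_on UNIV"
    by (simp add: absolutely_integrable_on_def abs_mult)
  show "\<bar>w y * (\<rho> y s - \<rho> y t - (s - t) * \<rho>' y t)\<bar>
      \<le> (1 + \<bar>y\<bar>) * \<bar>\<rho> y s - \<rho> y t - (s - t) * \<rho>' y t\<bar>" for y
    unfolding abs_mult by (rule mult_right_mono[OF w(2)]) simp
qed

lemma lorenz_tangent_remainder_le: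
  assumes "0 < s" "0 < t"
  shows "\<bar>lorenz_tangent \<rho> x f s - lorenz_tangent \<rho> x f t - tangent_rate x t * (s - t)\<bar>
    \<le> (1 + \<bar>x\<bar>) * taylor_remainder s t"
proof -
  define I where "I w = integral {..x} (\<lambda>y. w y * (\<rho> y s - \<rho> y t - (s - t) * \<rho>' y t))" for w
  have I_id: "I (\<lambda>y. y) = pmom \<rho> x s - pmom \<rho> x t - (s - t) * integral {..x} (\<lambda>y. y * \<rho>' y t)"
    unfolding I_def pmom_def by (rule integral_atMost_weighted_remainder[OF assms]) auto
  have I_1: "I (\<lambda>_. 1) = cdf \<rho> x s - cdf \<rho> x t - (s - t) * integral {..x} (\<lambda>y. \<rho>' y t)"
    unfolding I_def cdf_def using integral_atMost_weighted_remainder[OF assms, of "\<lambda>_. 1" x] by simp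
  have bounds: "\<bar>I (\<lambda>y. y)\<bar> \<le> taylor_remainder s t" "\<bar>I (\<lambda>_. 1)\<bar> \<le> taylor_remainder s t"
    unfolding I_def by (rule abs_integral_atMost_weighted_remainder_le[OF assms]; simp)+
  have "lorenz_tangent \<rho> x f s - lorenz_tangent \<rho> x f t - tangent_rate x t * (s - t)
      = I (\<lambda>y. y) - x * I (\<lambda>_. 1)"
    unfolding I_id I_1 lorenz_tangent_def tangent_rate_def by (simp add: algebra_simps)
  then have "\<bar>lorenz_tangent \<rho> x f s - lorenz_tangent \<rho> x f t - tangent_rate x t * (s - t)\<bar>
      \<le> \<bar>I (\<lambda>y. y)\<bar> + \<bar>x\<bar> * \<bar>I (\<lambda>_. 1)\<bar>"
    using abs_triangle_ineq4[of "I (\<lambda>y. y)" "x * I (\<lambda>_. 1)"] by (simp add: abs_mult)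
  also have "\<dots> \<le> taylor_remainder s t + \<bar>x\<bar> * taylor_remainder s t"
    using bounds by (intro add_mono mult_left_mono) auto
  finally show ?thesis
    by (simp add: algebra_simps)
qed

lemma tendsto_taylor_remainder:
  assumes "0 < t"
  shows "((\<lambda>s. taylor_remainder s t / \<bar>s - t\<bar>) \<longlongrightarrow> 0) (at t)"
proof -
  obtain \<epsilon> h where \<epsilon>: "0 < \<epsilon>" "\<epsilon> < t" and h: "h absolutely_integrable_on UNIV"
    and bound: "\<forall>s. \<bar>s - t\<bar> < \<epsilon> \<longrightarrow> (\<forall>y. (1 + \<bar>y\<bar>) * \<bar>\<rho>' y s\<bar> \<le> h y)"
    using dominated_rho_t[OF assms] by blast
  have "((\<lambda>s. integral UNIV (\<lambda>y. \<bar>(1 + \<bar>y\<bar>) * \<rho> y s - (1 + \<bar>y\<bar>) * \<rho> y t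
      - (s - t) * ((1 + \<bar>y\<bar>) * \<rho>' y t)\<bar>) / \<bar>s - t\<bar>) \<longlongrightarrow> 0) (at t)"
  proof (rule tendsto_integral_taylor_remainder[where u="\<lambda>y s. (1 + \<bar>y\<bar>) * \<rho> y s"
        and u'="\<lambda>y s. (1 + \<bar>y\<bar>) * \<rho>' y s", OF \<epsilon>(1)])
    show "((\<lambda>s. (1 + \<bar>y\<bar>) * \<rho> y s) has_real_derivative (1 + \<bar>y\<bar>) * \<rho>' y s) (at s)"
      if "\<bar>s - t\<bar> < \<epsilon>" for y s
      using that \<epsilon> by (intro DERIV_cmult rho_has_real_derivative) simp
    show "\<bar>(1 + \<bar>y\<bar>) * \<rho>' y s\<bar> \<le> h y" if "\<bar>s - t\<bar> < \<epsilon>" for y s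
      using that bound by (simp add: abs_mult)
    show "h integrable_on UNIV"
      using h by (simp add: absolutely_integrable_on_def)
    show "(\<lambda>y. (1 + \<bar>y\<bar>) * \<rho> y s) absolutely_integrable_on UNIV" if "\<bar>s - t\<bar> < \<epsilon>" for s
      using that \<epsilon> by (intro weighted_rho_integrable continuous_intros) auto
    show "(\<lambda>y. (1 + \<bar>y\<bar>) * \<rho>' y t) absolutely_integrable_on UNIV"
      using assms by (intro weighted_rho_t_integrable continuous_intros) auto
  qed
  moreover have "\<bar>(1 + \<bar>y\<bar>) * \<rho> y s - (1 + \<bar>y\<bar>) * \<rho> y t - (s - t) * ((1 + \<bar>y\<bar>) * \<rho>' y t)\<bar>
      = (1 + \<bar>y\<bar>) * \<bar>\<rho> y s - \<rho> y t - (s - t) * \<rho>' y t\<bar>" for y s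
  proof -
    have "(1 + \<bar>y\<bar>) * \<rho> y s - (1 + \<bar>y\<bar>) * \<rho> y t - (s - t) * ((1 + \<bar>y\<bar>) * \<rho>' y t)
        = (1 + \<bar>y\<bar>) * (\<rho> y s - \<rho> y t - (s - t) * \<rho>' y t)"
      by (simp add: algebra_simps)
    then show ?thesis
      by (simp only: abs_mult)
  qed
  ultimately show ?thesis
    by (simp add: taylor_remainder_def)
qed

lemma cdf_has_real_derivative_t:
  assumes "0 < t"
  shows "((\<lambda>s. cdf \<rho> x s) has_real_derivative integral {..x} (\<lambda>y. \<rho>' y t)) (at t)"
proof (rule has_real_derivative_remainder_bound)
  show "eventually (\<lambda>s. \<bar>cdf \<rho> x s - cdf \<rho> x t - integral {..x} (\<lambda>y. \<rho>' y t) * (s - t)\<bar>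
      \<le> taylor_remainder s t) (at t)"
    using order_tendstoD(1)[OF tendsto_ident_at assms]
  proof eventually_elim
    case (elim s)
    then show ?case
      using integral_atMost_weighted_remainder[OF elim assms, of "\<lambda>_. 1" x]
        abs_integral_atMost_weighted_remainder_le[OF elim assms, of "\<lambda>_. 1" x]
      by (simp add: cdf_def mult.commute)
  qed
qed (rule tendsto_taylor_remainder[OF assms])

lemma tendsto_quantile_t:
  assumes "0 < t" "0 < f" "f < 1"
  shows "((\<lambda>s. quantile \<rho> f s) \<longlongrightarrow> quantile \<rho> f t) (at t)"
proof -
  have cdf_quantile: "cdf \<rho> (quantile \<rho> f s) s = f" if "0 < s" for s
    using density_slice.cdf_quantile[OF density_slice[OF that] assms(2,3)] .
  have cdf_less_iff: "cdf \<rho> a s < cdf \<rho> b s \<longleftrightarrow> a < b" if "0 < s" for a b s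
    using density_slice.cdf_less_iff[OF density_slice[OF that]] .
  have cdf_t: "((\<lambda>s. cdf \<rho> a s) \<longlongrightarrow> cdf \<rho> a t) (at t)" for a
    using cdf_has_real_derivative_t[OF assms(1)] by (intro isContD DERIV_isCont)
  have pos: "eventually (\<lambda>s. 0 < s) (at t)"
    using order_tendstoD(1)[OF tendsto_ident_at assms(1)] .
  show ?thesis
  proof (rule order_tendstoI)
    fix a assume "a < quantile \<rho> f t"
    then have "cdf \<rho> a t < f"
      using assms cdf_less_iff cdf_quantile by metis
    then have "eventually (\<lambda>s. cdf \<rho> a s < f) (at t)"
      by (rule order_tendstoD(2)[OF cdf_t])
    with pos show "eventually (\<lambda>s. a < quantile \<rho> f s) (at t)"
      by eventually_elim (metis cdf_less_iff cdf_quantile)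
  next
    fix a assume "quantile \<rho> f t < a"
    then have "f < cdf \<rho> a t"
      using assms cdf_less_iff cdf_quantile by metis
    then have "eventually (\<lambda>s. f < cdf \<rho> a s) (at t)"
      by (rule order_tendstoD(1)[OF cdf_t])
    with pos show "eventually (\<lambda>s. quantile \<rho> f s < a) (at t)"
      by eventually_elim (metis cdf_less_iff cdf_quantile)
  qed
qed

lemma tangent_rate_has_real_derivative:
  assumes "0 < t"
  shows "((\<lambda>x. tangent_rate x t) has_real_derivative - integral {..x} (\<lambda>y. \<rho>' y t)) (at x)"
proof -
  have "((\<lambda>x. integral {..x} (\<lambda>y. y * \<rho>' y t)) has_real_derivative x * \<rho>' x t) (at x)"
    and "((\<lambda>x. integral {..x} (\<lambda>y. 1 * \<rho>' y t)) has_real_derivative 1 * \<rho>' x t) (at x)"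
    using assms
    by (intro has_real_derivative_integral_atMost weighted_rho_t_integrable continuous_intros
        continuous_on_slice(2); simp)+
  then have "((\<lambda>x. tangent_rate x t) has_real_derivative
      x * \<rho>' x t - (1 * integral {..x} (\<lambda>y. \<rho>' y t) + \<rho>' x t * x)) (at x)"
    unfolding tangent_rate_def by (intro DERIV_diff DERIV_mult DERIV_ident) simp_all
  then show ?thesis
    by (simp add: algebra_simps)
qed

lemma lorenz_has_real_derivative_t:
  assumes "0 < t" "0 < f" "f < 1"
  shows "((\<lambda>s. lorenz \<rho> f s) has_real_derivative tangent_rate (quantile \<rho> f t) t) (at t)"
proof (rule has_real_derivative_envelope[where K="\<lambda>x s. lorenz_tangent \<rho> x f s"
      and X="\<lambda>s. quantile \<rho> f s" and A="\<lambda>x. tangent_rate x t" and c="\<lambda>x. 1 + \<bar>x\<bar>"])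
  have pos: "eventually (\<lambda>s. 0 < s) (nhds t)"
    using eventually_nhds_in_open[of "{0<..}" t] assms(1) by simp
  show "eventually (\<lambda>s. \<forall>x. lorenz_tangent \<rho> x f s \<le> lorenz \<rho> f s) (nhds t)"
    using pos by eventually_elim
      (use density_slice.lorenz_tangent_le_lorenz[OF density_slice] assms in blast)
  show "eventually (\<lambda>s. lorenz_tangent \<rho> (quantile \<rho> f s) f s = lorenz \<rho> f s) (nhds t)"
    using pos by eventually_elim
      (use density_slice.lorenz_tangent_quantile[OF density_slice] assms in blast)
  show "eventually (\<lambda>s. \<forall>x. \<bar>lorenz_tangent \<rho> x f s - lorenz_tangent \<rho> x f t
      - tangent_rate x t * (s - t)\<bar> \<le> (1 + \<bar>x\<bar>) * taylor_remainder s t) (at t)"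
    using order_tendstoD(1)[OF tendsto_ident_at assms(1)]
    by eventually_elim (use lorenz_tangent_remainder_le assms(1) in blast)
  show "isCont (\<lambda>x. tangent_rate x t) (quantile \<rho> f t)"
    using tangent_rate_has_real_derivative[OF assms(1)] by (rule DERIV_isCont)
qed (use tendsto_taylor_remainder tendsto_quantile_t assms in auto)

end

section \<open>The Lorenz curve under a Fokker--Planck flow\<close>

locale fokker_planck = density_flow +
  fixes \<Sigma> D :: "real \<Rightarrow> real \<Rightarrow> (real \<Rightarrow> real) \<Rightarrow> real"
  assumes differentiable_drift: "\<And>x t. 0 < t \<Longrightarrow> (\<lambda>y. \<Sigma> y t (dens \<rho> t) * \<rho> y t) differentiable (at x)"
    and differentiable_diffusion: "\<And>x t. 0 < t \<Longrightarrow> (\<lambda>y. D y t (dens \<rho> t) * \<rho> y t) differentiable (at x)"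
    and differentiable_deriv_diffusion:
      "\<And>x t. 0 < t \<Longrightarrow> deriv (\<lambda>y. D y t (dens \<rho> t) * \<rho> y t) differentiable (at x)"
    and pde: "\<And>x t. 0 < t \<Longrightarrow>
         deriv (\<lambda>s. \<rho> x s) t =
           - deriv (\<lambda>y. \<Sigma> y t (dens \<rho> t) * \<rho> y t) x
           + deriv (deriv (\<lambda>y. D y t (dens \<rho> t) * \<rho> y t)) x"
    and boundary: "\<And>t. 0 < t \<Longrightarrow>
         ((\<lambda>x. \<Sigma> x t (dens \<rho> t) * \<rho> x t) \<longlongrightarrow> 0) at_bot \<and>
         ((\<lambda>x. deriv (\<lambda>y. D y t (dens \<rho> t) * \<rho> y t) x) \<longlongrightarrow> 0) at_bot \<and>
         ((\<lambda>x. D x t (dens \<rho> t) * \<rho> x t) \<longlongrightarrow> 0) at_bot \<and>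
         ((\<lambda>x. x * (\<Sigma> x t (dens \<rho> t) * \<rho> x t)) \<longlongrightarrow> 0) at_bot \<and>
         ((\<lambda>x. x * deriv (\<lambda>y. D y t (dens \<rho> t) * \<rho> y t) x) \<longlongrightarrow> 0) at_bot"
begin

abbreviation drift_flux :: "real \<Rightarrow> real \<Rightarrow> real" where
  "drift_flux t \<equiv> \<lambda>y. \<Sigma> y t (dens \<rho> t) * \<rho> y t"

abbreviation diffusion_flux :: "real \<Rightarrow> real \<Rightarrow> real" where
  "diffusion_flux t \<equiv> \<lambda>y. D y t (dens \<rho> t) * \<rho> y t"

lemma integral_rho_t:
  assumes "0 < t"
  shows "integral {..x} (\<lambda>y. \<rho>' y t) = deriv (diffusion_flux t) x - drift_flux t x"
proof (rule integral_atMost_antiderivative)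
  show "(\<lambda>y. \<rho>' y t) absolutely_integrable_on UNIV"
    using weighted_rho_t_integrable[OF assms, of "\<lambda>_. 1"] by simp
  show "((\<lambda>x. deriv (diffusion_flux t) x - drift_flux t x) has_real_derivative \<rho>' y t) (at y)" for y
  proof -
    have "((\<lambda>x. deriv (diffusion_flux t) x - drift_flux t x) has_real_derivative
        deriv (deriv (diffusion_flux t)) y - deriv (drift_flux t) y) (at y)"
      using differentiable_deriv_diffusion[OF assms] differentiable_drift[OF assms]
      by (intro DERIV_diff) (simp_all add: DERIV_deriv_iff_real_differentiable)
    then show ?thesis
      using pde[OF assms, of y] by simp
  qed
  show "((\<lambda>x. deriv (diffusion_flux t) x - drift_flux t x) \<longlongrightarrow> 0) at_bot"
    using boundary[OF assms] tendsto_diff by fastforce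
qed

lemma tangent_rate_plus_diffusion_has_real_derivative:
  assumes "0 < t"
  shows "((\<lambda>x. tangent_rate x t + diffusion_flux t x) has_real_derivative drift_flux t x) (at x)"
proof -
  have "((\<lambda>x. tangent_rate x t + diffusion_flux t x) has_real_derivative
      - integral {..x} (\<lambda>y. \<rho>' y t) + deriv (diffusion_flux t) x) (at x)"
    using differentiable_diffusion[OF assms]
    by (intro DERIV_add tangent_rate_has_real_derivative[OF assms])
       (simp add: DERIV_deriv_iff_real_differentiable)
  then show ?thesis
    by (simp add: integral_rho_t[OF assms])
qed

lemma tendsto_tangent_rate_plus_diffusion_at_bot:
  assumes "0 < t"
  shows "((\<lambda>x. tangent_rate x t + diffusion_flux t x) \<longlongrightarrow> 0) at_bot"
proof -
  have "((\<lambda>x. integral {..x} (\<lambda>y. y * \<rho>' y t) - (x * deriv (diffusion_flux t) x - x * drift_flux t x)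
      + diffusion_flux t x) \<longlongrightarrow> 0 - (0 - 0) + 0) at_bot"
    using boundary[OF assms] assms
    by (intro tendsto_intros tendsto_integral_atMost_at_bot weighted_rho_t_integrable)
       (auto intro: continuous_intros)
  then show ?thesis
    by (simp add: tangent_rate_def integral_rho_t[OF assms] algebra_simps)
qed

lemma lorenz_equation:
  assumes "0 < t" "0 < f" "f < 1"
  shows "((\<lambda>s. lorenz \<rho> f s) has_real_derivative
           (- D (deriv (\<lambda>g. lorenz \<rho> g t) f) t
                (\<lambda>x. 1 / deriv (deriv (\<lambda>g. lorenz \<rho> g t)) (cdf \<rho> x t))
              / deriv (deriv (\<lambda>g. lorenz \<rho> g t)) f
            + integral {0..f} (\<lambda>g. \<Sigma> (deriv (\<lambda>h. lorenz \<rho> h t) g) t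
                (\<lambda>x. 1 / deriv (deriv (\<lambda>h. lorenz \<rho> h t)) (cdf \<rho> x t))))) (at t)"
proof -
  interpret density_slice \<rho> t
    using density_slice[OF assms(1)] .
  define G where "G = quantile \<rho> f t"
  have "((\<lambda>g. \<Sigma> (deriv (\<lambda>h. lorenz \<rho> h t) g) t (dens \<rho> t)) has_integral
      tangent_rate G t + diffusion_flux t G) {0..f}"
    unfolding G_def
  proof (rule has_integral_quantile_substitution[where \<phi>="\<lambda>x. \<Sigma> x t (dens \<rho> t)"])
    show "((\<lambda>x. tangent_rate x t + diffusion_flux t x) has_real_derivative
        \<Sigma> x t (dens \<rho> t) * \<rho> x t) (at x)" for x
      using tangent_rate_plus_diffusion_has_real_derivative[OF assms(1)] .
  qed (use assms deriv_lorenz tendsto_tangent_rate_plus_diffusion_at_bot in auto)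
  then have "integral {0..f} (\<lambda>g. \<Sigma> (deriv (\<lambda>h. lorenz \<rho> h t) g) t (dens \<rho> t))
      = tangent_rate G t + D G t (dens \<rho> t) * \<rho> G t"
    by (rule integral_unique)
  moreover have "D G t (dens \<rho> t) / deriv (deriv (\<lambda>g. lorenz \<rho> g t)) f = D G t (dens \<rho> t) * \<rho> G t"
    by (simp add: G_def deriv2_lorenz[OF assms(2,3)] divide_inverse)
  ultimately show ?thesis
    using lorenz_has_real_derivative_t[OF assms]
    by (simp add: density_eq_lorenz deriv_lorenz[OF assms(2,3)] G_def)
qed

end

theorem mainTheorem1:
  fixes \<Sigma> D :: "real \<Rightarrow> real \<Rightarrow> (real \<Rightarrow> real) \<Rightarrow> real"
    and \<rho> :: "real \<Rightarrow> real \<Rightarrow> real"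
    and \<rho>0 :: "real \<Rightarrow> real"
  assumes D_pos: "\<And>x t p. 0 < t \<Longrightarrow> Pac_pos p \<Longrightarrow> 0 < D x t p"
    and init: "Pac_pos \<rho>0" "\<And>x. \<rho> x 0 = \<rho>0 x"
    and dens_ok: "\<And>t. 0 \<le> t \<Longrightarrow> Pac_pos (dens \<rho> t) \<and> finite_first_moment (dens \<rho> t)"
    and decay: "\<And>t. 0 \<le> t \<Longrightarrow> ((\<lambda>x. \<rho> x t) \<longlongrightarrow> 0) at_top \<and> ((\<lambda>x. \<rho> x t) \<longlongrightarrow> 0) at_bot"
    (* regularity ("sufficiently smooth") *)
    and cont_rho: "continuous_on (UNIV \<times> {0<..}) (\<lambda>(x, t). \<rho> x t)"
    and diff_t: "\<And>x t. 0 < t \<Longrightarrow> (\<lambda>s. \<rho> x s) differentiable (at t)"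
    and cont_rho_t: "continuous_on (UNIV \<times> {0<..}) (\<lambda>(x, t). deriv (\<lambda>s. \<rho> x s) t)"
    and dom_rho_t: "\<And>t. 0 < t \<Longrightarrow> \<exists>\<epsilon> h. 0 < \<epsilon> \<and> \<epsilon> < t \<and> h absolutely_integrable_on UNIV \<and>
         (\<forall>s. \<bar>s - t\<bar> < \<epsilon> \<longrightarrow> (\<forall>y. (1 + \<bar>y\<bar>) * \<bar>deriv (\<lambda>r. \<rho> y r) s\<bar> \<le> h y))"
    and diff_drift: "\<And>x t. 0 < t \<Longrightarrow> (\<lambda>y. \<Sigma> y t (dens \<rho> t) * \<rho> y t) differentiable (at x)"
    and diff_diff1: "\<And>x t. 0 < t \<Longrightarrow> (\<lambda>y. D y t (dens \<rho> t) * \<rho> y t) differentiable (at x)"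
    and diff_diff2: "\<And>x t. 0 < t \<Longrightarrow> deriv (\<lambda>y. D y t (dens \<rho> t) * \<rho> y t) differentiable (at x)"
    (* the PDE *)
    and pde: "\<And>x t. 0 < t \<Longrightarrow>
         deriv (\<lambda>s. \<rho> x s) t =
           - deriv (\<lambda>y. \<Sigma> y t (dens \<rho> t) * \<rho> y t) x
           + deriv (deriv (\<lambda>y. D y t (dens \<rho> t) * \<rho> y t)) x"
    (* vanishing boundary terms at -infinity *)
    and bdry: "\<And>t. 0 < t \<Longrightarrow>
         ((\<lambda>x. \<Sigma> x t (dens \<rho> t) * \<rho> x t) \<longlongrightarrow> 0) at_bot \<and>
         ((\<lambda>x. deriv (\<lambda>y. D y t (dens \<rho> t) * \<rho> y t) x) \<longlongrightarrow> 0) at_bot \<and>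
         ((\<lambda>x. D x t (dens \<rho> t) * \<rho> x t) \<longlongrightarrow> 0) at_bot \<and>
         ((\<lambda>x. x * (\<Sigma> x t (dens \<rho> t) * \<rho> x t)) \<longlongrightarrow> 0) at_bot \<and>
         ((\<lambda>x. x * deriv (\<lambda>y. D y t (dens \<rho> t) * \<rho> y t) x) \<longlongrightarrow> 0) at_bot"
    and f_in: "0 < f" "f < 1"
    and t_pos: "0 < t"
  shows "((\<lambda>s. lorenz \<rho> f s) has_real_derivative
           (- D (deriv (\<lambda>g. lorenz \<rho> g t) f) t
                (\<lambda>x. 1 / deriv (deriv (\<lambda>g. lorenz \<rho> g t)) (cdf \<rho> x t))
              / deriv (deriv (\<lambda>g. lorenz \<rho> g t)) f
            + integral {0..f} (\<lambda>g. \<Sigma> (deriv (\<lambda>h. lorenz \<rho> h t) g) t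
                (\<lambda>x. 1 / deriv (deriv (\<lambda>h. lorenz \<rho> h t)) (cdf \<rho> x t))))) (at t)"
proof -
  interpret fokker_planck \<rho> \<Sigma> D
  proof unfold_locales
    show "Pac_pos (dens \<rho> t) \<and> finite_first_moment (dens \<rho> t)" if "0 < t" for t
      using dens_ok that by simp
  qed (fact cont_rho diff_t cont_rho_t dom_rho_t diff_drift diff_diff1 diff_diff2 pde bdry)+
  show ?thesis
    using lorenz_equation[OF t_pos f_in] .
qed

end
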